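(* Let $f$ be a scaling function and let $(\sigma_j)_{j\in\mathbb{N}}$ be a sequence of permutations with $|\sigma_j|\to\infty$ that converges at scale $f$ to the increasing limit, i.e. $\rho_{f}(\pi,\sigma_j)\to1$ if $\pi$ is an increasing permutation $12\dots k$ and $\rho_f(\pi,\sigma_j)\to0$ for every other permutation $\pi$. Then for every constant $c\in(0,1)$, the sequence $(\sigma_j)$ also converges at scale $cf$ to the increasing limit.
   Context: A scaling function is a function $f:\mathbb{N}\to\mathbb{R}^+$ with $f(n)\le n$ for all $n$, $f(n)\to\infty$ and $f(n)/n\to 0$. An occurrence of a pattern $\pi\in S_k$ in $\sigma\in S_n$ is a $k$-element set of indices $i_1<\dots<i_k$ such that $\sigma(i_1)\dots\sigma(i_k)$ is order-isomorphic to $\pi$; its width is $i_k-i_1+1$. For real $f\in[k,n]$, $\rho_f(\pi,\sigma)$ is the number of occurrences of $\pi$ in $\sigma$ of width at most $f$ divided by the number of $k$-element subsets of $[n]$ of width at most $f$, and $\rho_f(\pi,\sigma_j)$ means $\rho_{f(|\sigma_j|)}(\pi,\sigma_j)$. Convergence at scale $g$ to $\Xi$ means $\rho_{g(|\sigma_j|)}(\pi,\sigma_j)\to\Xi_\pi$ for every permutation $\pi$. *)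

theory Defs
  imports "HOL-Analysis.Analysis"
begin

text \<open>Permutations of length n are lists that are arrangements of 0,...,n-1
  (0-based values and 0-based positions).\<close>
definition is_perm :: "nat list \<Rightarrow> bool" where
  "is_perm \<sigma> \<longleftrightarrow> distinct \<sigma> \<and> set \<sigma> = {0..<length \<sigma>}"

definition order_iso :: "nat list \<Rightarrow> nat list \<Rightarrow> bool" where
  "order_iso xs ys \<longleftrightarrow> length xs = length ys \<and>
     (\<forall>a<length xs. \<forall>b<length xs. (xs ! a < xs ! b) \<longleftrightarrow> (ys ! a < ys ! b))"

definition width :: "nat set \<Rightarrow> nat" where
  "width I = Max I - Min I + 1"

definition subsets_within :: "real \<Rightarrow> nat \<Rightarrow> nat \<Rightarrow> nat set set" where
  "subsets_within f k n = {I. I \<subseteq> {0..<n} \<and> card I = k \<and> real (width I) \<le> f}"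

definition occurrences_within :: "real \<Rightarrow> nat list \<Rightarrow> nat list \<Rightarrow> nat set set" where
  "occurrences_within f \<pi> \<sigma> = {I \<in> subsets_within f (length \<pi>) (length \<sigma>).
      order_iso (map (\<lambda>i. \<sigma> ! i) (sorted_list_of_set I)) \<pi>}"

definition rho :: "real \<Rightarrow> nat list \<Rightarrow> nat list \<Rightarrow> real" where
  "rho f \<pi> \<sigma> = real (card (occurrences_within f \<pi> \<sigma>)) / real (card (subsets_within f (length \<pi>) (length \<sigma>)))"

definition scaling_function :: "(nat \<Rightarrow> real) \<Rightarrow> bool" where
  "scaling_function f \<longleftrightarrow> (\<forall>n\<ge>1. 0 < f n \<and> f n \<le> real n) \<and> filterlim f at_top sequentially
     \<and> ((\<lambda>n. f n / real n) \<longlonglongrightarrow> 0)"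

definition converges_increasing_at_scale :: "(nat \<Rightarrow> real) \<Rightarrow> (nat \<Rightarrow> nat list) \<Rightarrow> bool" where
  "converges_increasing_at_scale g \<sigma>s \<longleftrightarrow>
     (\<forall>\<pi>. is_perm \<pi> \<and> length \<pi> \<ge> 1 \<longrightarrow>
        ((\<lambda>j. rho (g (length (\<sigma>s j))) \<pi> (\<sigma>s j)) \<longlonglongrightarrow>
           (if \<pi> = [0..<length \<pi>] then 1 else 0)))"

end

theory Submission imports Defs begin

text \<open>Every pattern other than the increasing one is bounded by the density of non-increasing
  windows, so convergence to the increasing limit only needs the densities of the increasing
  patterns to tend to 1. The non-increasing windows of width at most w form a family that grows
  with w, whereas the number of all k-windows of width at most w is of order n w^(k-1). Hence
  shrinking the scale by the constant factor c multiplies the density of non-increasing windows by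
  at most a constant depending on c and k, and it still tends to 0.\<close>

lemma finite_subsets_within: "finite (subsets_within w k n)"
  by (rule finite_subset[of _ "Pow {0..<n}"]) (auto simp: subsets_within_def)

lemma subsets_within_mono: "w1 \<le> w2 \<Longrightarrow> subsets_within w1 k n \<subseteq> subsets_within w2 k n"
  by (auto simp: subsets_within_def)

lemma occurrences_within_subset:
  "occurrences_within w \<pi> \<sigma> \<subseteq> subsets_within w (length \<pi>) (length \<sigma>)"
  by (auto simp: occurrences_within_def)

lemma finite_occurrences_within: "finite (occurrences_within w \<pi> \<sigma>)"
  using finite_subset[OF occurrences_within_subset finite_subsets_within] .

lemma rho_le_one: "rho w \<pi> \<sigma> \<le> 1"
  using card_mono[OF finite_subsets_within occurrences_within_subset, of w \<pi> \<sigma>]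
  unfolding rho_def by (cases "card (subsets_within w (length \<pi>) (length \<sigma>)) = 0") auto

lemma increasing_if_order_iso_increasing:
  assumes "is_perm \<pi>" "order_iso xs \<pi>" "order_iso xs [0..<length \<pi>]"
  shows "\<pi> = [0..<length \<pi>]"
proof -
  have "\<forall>a<length \<pi>. \<forall>b<length \<pi>. a < b \<longleftrightarrow> \<pi> ! a < \<pi> ! b"
    using assms(2,3) unfolding order_iso_def by auto
  then have "sorted \<pi>"
    unfolding sorted_iff_nth_mono_less by (meson less_imp_le order.strict_trans)
  with assms(1) show ?thesis
    by (intro sorted_distinct_set_unique) (auto simp: is_perm_def)
qed

lemma rho_le_one_minus_rho_increasing:
  assumes "is_perm \<pi>" "\<pi> \<noteq> [0..<length \<pi>]"
  shows "rho w \<pi> \<sigma> \<le> 1 - rho w [0..<length \<pi>] \<sigma>"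
proof -
  let ?S = "subsets_within w (length \<pi>) (length \<sigma>)"
  let ?P = "occurrences_within w \<pi> \<sigma>" and ?A = "occurrences_within w [0..<length \<pi>] \<sigma>"
  have "?P \<inter> ?A = {}"
    using increasing_if_order_iso_increasing[OF assms(1)] assms(2)
    by (auto simp: occurrences_within_def)
  then have "card ?P + card ?A = card (?P \<union> ?A)"
    by (simp add: card_Un_disjoint finite_occurrences_within)
  also have "\<dots> \<le> card ?S"
    using occurrences_within_subset[of w \<pi> \<sigma>] occurrences_within_subset[of w "[0..<length \<pi>]" \<sigma>]
    by (intro card_mono finite_subsets_within) auto
  finally have "real (card ?P) + real (card ?A) \<le> real (card ?S)"
    by (simp only: of_nat_add[symmetric] of_nat_le_iff)
  then show ?thesis
    unfolding rho_def by (cases "card ?S = 0") (auto simp: field_simps)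
qed

lemma one_minus_rho_increasing_le:
  fixes K :: real
  assumes "w1 \<le> w2" and pos: "0 < card (subsets_within w1 k (length \<sigma>))"
    and ratio: "real (card (subsets_within w2 k (length \<sigma>))) \<le> K * card (subsets_within w1 k (length \<sigma>))"
  shows "1 - rho w1 [0..<k] \<sigma> \<le> K * (1 - rho w2 [0..<k] \<sigma>)"
proof -
  define S where "S w = subsets_within w k (length \<sigma>)" for w
  define A where "A w = occurrences_within w [0..<k] \<sigma>" for w
  have AS: "A w \<subseteq> S w" for w
    using occurrences_within_subset[of w "[0..<k]" \<sigma>] by (simp add: A_def S_def)
  have defect: "real (card (S w - A w)) = real (card (S w)) - real (card (A w))" for w
    using AS card_mono[OF _ AS]
    by (simp add: card_Diff_subset finite_occurrences_within A_def S_def finite_subsets_within of_nat_diff)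
  have one_minus: "1 - rho w [0..<k] \<sigma> = real (card (S w - A w)) / card (S w)"
    if "0 < card (S w)" for w
    using that by (simp add: rho_def defect diff_divide_distrib) (simp add: S_def A_def)
  have "S w1 - A w1 \<subseteq> S w2 - A w2"
    using \<open>w1 \<le> w2\<close> by (auto simp: S_def A_def subsets_within_def occurrences_within_def)
  then have mono: "card (S w1 - A w1) \<le> card (S w2 - A w2)"
    by (intro card_mono) (simp_all add: S_def finite_subsets_within)
  have S12: "card (S w1) \<le> card (S w2)"
    using card_mono[OF finite_subsets_within subsets_within_mono[OF \<open>w1 \<le> w2\<close>]] by (simp add: S_def)
  have pos1: "0 < card (S w1)" and pos2: "0 < card (S w2)"
    using pos S12 by (simp_all add: S_def)
  have "1 - rho w1 [0..<k] \<sigma> \<le> real (card (S w2 - A w2)) / card (S w1)"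
    using mono pos1 by (simp add: one_minus divide_right_mono)
  also have "\<dots> \<le> K * (real (card (S w2 - A w2)) / card (S w2))"
  proof -
    have "real (card (S w2)) * card (S w2 - A w2) \<le> K * card (S w1) * card (S w2 - A w2)"
      using ratio by (intro mult_right_mono) (simp_all add: S_def)
    then show ?thesis
      using pos1 pos2 by (simp add: field_simps)
  qed
  also have "\<dots> = K * (1 - rho w2 [0..<k] \<sigma>)"
    using pos2 by (simp add: one_minus)
  finally show ?thesis .
qed

lemma converges_increasing_at_scale_iff:
  "converges_increasing_at_scale g \<sigma>s \<longleftrightarrow>
     (\<forall>k\<ge>1. (\<lambda>j. rho (g (length (\<sigma>s j))) [0..<k] (\<sigma>s j)) \<longlonglongrightarrow> 1)"
proof
  assume lim: "converges_increasing_at_scale g \<sigma>s"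
  show "\<forall>k\<ge>1. (\<lambda>j. rho (g (length (\<sigma>s j))) [0..<k] (\<sigma>s j)) \<longlonglongrightarrow> 1"
  proof (intro allI impI)
    fix k :: nat assume "k \<ge> 1"
    then have "is_perm [0..<k] \<and> length [0..<k] \<ge> 1"
      by (simp add: is_perm_def)
    from lim[unfolded converges_increasing_at_scale_def, rule_format, OF this]
    show "(\<lambda>j. rho (g (length (\<sigma>s j))) [0..<k] (\<sigma>s j)) \<longlonglongrightarrow> 1"
      by simp
  qed
next
  assume inc: "\<forall>k\<ge>1. (\<lambda>j. rho (g (length (\<sigma>s j))) [0..<k] (\<sigma>s j)) \<longlonglongrightarrow> 1"
  show "converges_increasing_at_scale g \<sigma>s"
    unfolding converges_increasing_at_scale_def
  proof (intro allI impI)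
    fix \<pi> assume \<pi>: "is_perm \<pi> \<and> length \<pi> \<ge> 1"
    let ?r = "\<lambda>\<pi> j. rho (g (length (\<sigma>s j))) \<pi> (\<sigma>s j)"
    have lim: "?r [0..<length \<pi>] \<longlonglongrightarrow> 1"
      using inc \<pi> by simp
    show "?r \<pi> \<longlonglongrightarrow> (if \<pi> = [0..<length \<pi>] then 1 else 0)"
    proof (cases "\<pi> = [0..<length \<pi>]")
      case True
      from lim have "?r \<pi> \<longlonglongrightarrow> 1"
        by (subst (asm) True[symmetric])
      then show ?thesis
        by (simp only: if_P[OF True])
    next
      case False
      have upper: "(\<lambda>j. 1 - ?r [0..<length \<pi>] j) \<longlonglongrightarrow> 0"
        using tendsto_diff[OF tendsto_const lim, of 1] by simp
      have below: "?r \<pi> j \<le> 1 - ?r [0..<length \<pi>] j" for j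
        using \<pi> False by (intro rho_le_one_minus_rho_increasing) auto
      have "?r \<pi> \<longlonglongrightarrow> 0"
        by (rule tendsto_sandwich[OF always_eventually always_eventually tendsto_const upper])
           (simp_all add: below, simp add: rho_def)
      with False show ?thesis
        by simp
    qed
  qed
qed

definition anchored_subsets :: "nat \<Rightarrow> nat \<Rightarrow> nat \<Rightarrow> nat set set" where
  "anchored_subsets s m k = insert s ` {J. J \<subseteq> {s<..<s+m} \<and> card J = k - 1}"

lemma card_anchored_subsets: "card (anchored_subsets s m k) = (m - 1) choose (k - 1)"
proof -
  have "inj_on (insert s) {J. J \<subseteq> {s<..<s+m} \<and> card J = k - 1}"
    by (rule inj_onI) (metis Diff_insert_absorb greaterThanLessThan_iff less_irrefl mem_Collect_eq subsetD)
  moreover have "card {s<..<s+m} = m - 1"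
    by simp
  ultimately show ?thesis
    by (simp add: anchored_subsets_def card_image n_subsets)
qed

lemma finite_anchored_subsets: "finite (anchored_subsets s m k)"
  unfolding anchored_subsets_def
  by (rule finite_imageI, rule finite_subset[of _ "Pow {s<..<s+m}"]) auto

lemma anchored_subsets_disjoint:
  "s \<noteq> t \<Longrightarrow> anchored_subsets s m k \<inter> anchored_subsets t m k = {}"
  unfolding anchored_subsets_def by (auto; metis greaterThanLessThan_iff insertCI insertE not_less_iff_gr_or_eq subsetD)

lemma subsets_within_subset_anchored:
  assumes "k \<ge> 1"
  shows "subsets_within w k n \<subseteq> (\<Union>s<n. anchored_subsets s (nat \<lfloor>w\<rfloor>) k)"
proof
  fix I assume "I \<in> subsets_within w k n"
  then have I: "I \<subseteq> {0..<n}" "card I = k" "real (width I) \<le> w"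
    by (auto simp: subsets_within_def)
  then have fin: "finite I" and "I \<noteq> {}"
    using assms finite_subset by auto
  define s where "s = Min I"
  have "s \<in> I"
    using fin \<open>I \<noteq> {}\<close> by (simp add: s_def)
  then have s: "s \<in> I" "s < n"
    using I(1) by auto
  have "I - {s} \<subseteq> {s<..<s + nat \<lfloor>w\<rfloor>}"
  proof
    fix x assume x: "x \<in> I - {s}"
    then have "s \<le> x" "x \<le> Max I"
      using fin by (simp_all add: s_def)
    then have "s < x" "x \<le> Max I"
      using x by auto
    moreover have "width I \<le> nat \<lfloor>w\<rfloor>"
      using I(3) by linarith
    ultimately show "x \<in> {s<..<s + nat \<lfloor>w\<rfloor>}"
      by (auto simp: width_def s_def)
  qed
  moreover have "card (I - {s}) = k - 1" "I = insert s (I - {s})"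
    using I(2) s fin by auto
  ultimately show "I \<in> (\<Union>s<n. anchored_subsets s (nat \<lfloor>w\<rfloor>) k)"
    unfolding anchored_subsets_def using s(2) by blast
qed

lemma anchored_subsets_subset_subsets_within:
  assumes "k \<ge> 1" "1 \<le> m" "real m \<le> w" "s + m \<le> n"
  shows "anchored_subsets s m k \<subseteq> subsets_within w k n"
proof
  fix I assume "I \<in> anchored_subsets s m k"
  then obtain J where J: "J \<subseteq> {s<..<s+m}" "card J = k - 1" and I: "I = insert s J"
    by (auto simp: anchored_subsets_def)
  have fin: "finite J" "s \<notin> J"
    using J finite_subset by auto
  have range: "I \<subseteq> {s..s + m - 1}"
    using assms(2) J(1) unfolding I by (auto simp: subset_iff)
  have "Min I = s"
    using I fin J by (intro Min_eqI) auto
  moreover have "Max I \<le> s + m - 1"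
    using range I fin by (subst Max_le_iff) auto
  ultimately have "width I \<le> m"
    using assms(2) by (simp add: width_def)
  then show "I \<in> subsets_within w k n"
    using range fin J assms unfolding subsets_within_def by (auto simp: I)
qed

lemma card_subsets_within_le:
  assumes "k \<ge> 1" "0 \<le> w"
  shows "real (card (subsets_within w k n)) \<le> real n * w ^ (k - 1)"
proof -
  define m where "m = nat \<lfloor>w\<rfloor>"
  have "card (subsets_within w k n) \<le> card (\<Union>s<n. anchored_subsets s m k)"
    using subsets_within_subset_anchored[OF assms(1)]
    by (intro card_mono) (simp_all add: finite_anchored_subsets m_def)
  also have "\<dots> \<le> (\<Sum>s<n. card (anchored_subsets s m k))"
    by (rule card_UN_le) simp
  also have "\<dots> = n * ((m - 1) choose (k - 1))"
    by (simp add: card_anchored_subsets)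
  finally have "real (card (subsets_within w k n)) \<le> real n * real ((m - 1) choose (k - 1))"
    by (metis of_nat_le_iff of_nat_mult)
  moreover have "real ((m - 1) choose (k - 1)) \<le> w ^ (k - 1)"
  proof (cases "k - 1 \<le> m - 1")
    case True
    then have "real ((m - 1) choose (k - 1)) \<le> real (m - 1) ^ (k - 1)"
      by (metis binomial_le_pow of_nat_le_iff of_nat_power)
    also have "\<dots> \<le> w ^ (k - 1)"
      using assms(2) by (intro power_mono) (auto simp: m_def, linarith)
    finally show ?thesis .
  qed (use assms in \<open>simp add: binomial_eq_0\<close>)
  ultimately show ?thesis
    by (meson mult_left_mono of_nat_0_le_iff order_trans)
qed

lemma binomial_window_ge:
  assumes "k \<ge> 1" "real k + 4 \<le> w" "m = nat \<lfloor>w\<rfloor>"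
  shows "(w / (2 * real k)) ^ (k - 1) \<le> real ((m - 1) choose (k - 1))"
proof (cases "k = 1")
  case False
  have w: "0 \<le> w" "w / 2 \<le> real (m - 1)"
    using assms by (simp_all add: of_nat_diff) linarith+
  have "w / (2 * real k) \<le> w / (2 * real (k - 1))"
    using False assms(1) w(1) by (intro divide_left_mono) auto
  also have "\<dots> \<le> real (m - 1) / real (k - 1)"
    using w(2) by (simp add: divide_right_mono flip: divide_divide_eq_left)
  finally have "w / (2 * real k) \<le> real (m - 1) / real (k - 1)" .
  then have "(w / (2 * real k)) ^ (k - 1) \<le> (real (m - 1) / real (k - 1)) ^ (k - 1)"
    using assms by (intro power_mono) auto
  also have "\<dots> \<le> real ((m - 1) choose (k - 1))"
    using assms by (intro binomial_ge_n_over_k_pow_k) linarith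
  finally show ?thesis .
qed simp

lemma card_subsets_within_ge:
  assumes "k \<ge> 1" "real k + 4 \<le> w" "w \<le> real n"
  shows "(real n - w) * (w / (2 * real k)) ^ (k - 1) \<le> real (card (subsets_within w k n))"
proof -
  define m where "m = nat \<lfloor>w\<rfloor>"
  have m: "1 \<le> m" "real m \<le> w" "m \<le> n" "w < real m + 1"
    using assms by (auto simp: m_def) linarith+
  have "(\<Union>s\<in>{0..n-m}. anchored_subsets s m k) \<subseteq> subsets_within w k n"
    using m(3) by (intro UN_least anchored_subsets_subset_subsets_within[OF assms(1) m(1,2)]) auto
  then have "card (\<Union>s\<in>{0..n-m}. anchored_subsets s m k) \<le> card (subsets_within w k n)"
    by (intro card_mono finite_subsets_within)
  moreover have "card (\<Union>s\<in>{0..n-m}. anchored_subsets s m k) = (n - m + 1) * ((m - 1) choose (k - 1))"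
    by (subst card_UN_disjoint) (simp_all add: anchored_subsets_disjoint card_anchored_subsets finite_anchored_subsets)
  ultimately have count: "real (n - m + 1) * real ((m - 1) choose (k - 1)) \<le> real (card (subsets_within w k n))"
    by (metis of_nat_le_iff of_nat_mult)
  have "real n - w \<le> real (n - m + 1)"
    using m by (simp add: of_nat_diff)
  then have "(real n - w) * (w / (2 * real k)) ^ (k - 1) \<le> real (n - m + 1) * real ((m - 1) choose (k - 1))"
    using assms binomial_window_ge[OF assms(1,2) m_def] by (intro mult_mono) auto
  with count show ?thesis
    by linarith
qed

lemma card_subsets_within_pos:
  assumes "k \<ge> 1" "real k \<le> w" "k \<le> n"
  shows "0 < card (subsets_within w k n)"
proof -
  have "Max {0..<k} < k"
    using assms(1) by (simp add: Max_less_iff)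
  then have "width {0..<k} \<le> k"
    by (simp add: width_def)
  then have "{0..<k} \<in> subsets_within w k n"
    using assms by (auto simp: subsets_within_def)
  then show ?thesis
    by (auto simp: card_gt_0_iff finite_subsets_within)
qed

lemma card_subsets_within_scale:
  fixes c w :: real
  assumes "k \<ge> 1" "0 < c" "c < 1" "w \<le> real n" "real k + 4 \<le> c * w"
  shows "real (card (subsets_within w k n))
           \<le> (2 * real k / c) ^ (k - 1) / (1 - c) * real (card (subsets_within (c * w) k n))"
proof -
  have "0 < c * w"
    using assms(5) by linarith
  then have w: "0 \<le> w" "c * w \<le> c * real n"
    using assms(2,4) by (simp_all add: zero_less_mult_iff)
  have "c * w \<le> real n"
    using w(2) mult_left_le_one_le[of "real n" c] assms(2,3) by linarith
  define X where "X = (c * w / (2 * real k)) ^ (k - 1)"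
  define K where "K = (2 * real k / c) ^ (k - 1)"
  have "K * X = w ^ (k - 1)"
    unfolding K_def X_def using assms(1,2) by (simp flip: power_mult_distrib)
  then have "real n * w ^ (k - 1) = K / (1 - c) * ((1 - c) * real n * X)"
    using assms(3) by simp
  also have "\<dots> \<le> K / (1 - c) * ((real n - c * w) * X)"
  proof (intro mult_left_mono mult_right_mono)
    show "(1 - c) * real n \<le> real n - c * w"
      using w(2) by (simp add: algebra_simps)
    show "0 \<le> X" "0 \<le> K / (1 - c)"
      using assms(2,3) w(1) by (simp_all add: X_def K_def)
  qed
  also have "\<dots> \<le> K / (1 - c) * real (card (subsets_within (c * w) k n))"
    unfolding X_def using assms \<open>c * w \<le> real n\<close>
    by (intro mult_left_mono card_subsets_within_ge) (simp_all add: K_def)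
  finally show ?thesis
    unfolding K_def
    using card_subsets_within_le[OF assms(1) w(1), of n] by linarith
qed

lemma one_minus_rho_increasing_scale:
  fixes c w :: real
  assumes "k \<ge> 1" "0 < c" "c < 1" "w \<le> real (length \<sigma>)" "real k + 4 \<le> c * w"
  shows "1 - rho (c * w) [0..<k] \<sigma> \<le> (2 * real k / c) ^ (k - 1) / (1 - c) * (1 - rho w [0..<k] \<sigma>)"
proof (rule one_minus_rho_increasing_le)
  have "0 < c * w"
    using assms(5) by linarith
  then show cw: "c * w \<le> w"
    using assms(2,3) by (simp add: zero_less_mult_iff)
  have "real k \<le> c * w" "k \<le> length \<sigma>"
    using assms(4,5) cw by linarith+
  then show "0 < card (subsets_within (c * w) k (length \<sigma>))"
    by (rule card_subsets_within_pos[OF assms(1)])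
  show "real (card (subsets_within w k (length \<sigma>)))
          \<le> (2 * real k / c) ^ (k - 1) / (1 - c) * real (card (subsets_within (c * w) k (length \<sigma>)))"
    by (rule card_subsets_within_scale[OF assms])
qed

lemma tendsto_rho_increasing_rescale:
  fixes F :: "nat \<Rightarrow> real"
  assumes "k \<ge> 1" "0 < c" "c < 1" "filterlim F at_top sequentially"
    and "\<forall>\<^sub>F j in sequentially. F j \<le> real (length (\<sigma>s j))"
    and "(\<lambda>j. rho (F j) [0..<k] (\<sigma>s j)) \<longlonglongrightarrow> 1"
  shows "(\<lambda>j. rho (c * F j) [0..<k] (\<sigma>s j)) \<longlonglongrightarrow> 1"
proof -
  define K where "K = (2 * real k / c) ^ (k - 1) / (1 - c)"
  let ?d = "\<lambda>w j. 1 - rho w [0..<k] (\<sigma>s j)"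
  from tendsto_mult[OF tendsto_const tendsto_diff[OF tendsto_const assms(6)], of K 1]
  have upper: "(\<lambda>j. K * ?d (F j) j) \<longlonglongrightarrow> 0"
    by simp
  have "\<forall>\<^sub>F j in sequentially. (real k + 4) / c \<le> F j"
    using assms(4) by (simp add: filterlim_at_top)
  with assms(5) have bound: "\<forall>\<^sub>F j in sequentially. ?d (c * F j) j \<le> K * ?d (F j) j"
  proof eventually_elim
    case (elim j)
    then have "real k + 4 \<le> c * F j"
      using assms(2) by (simp add: field_simps)
    with elim assms(1-3) show ?case
      unfolding K_def by (intro one_minus_rho_increasing_scale)
  qed
  have "(\<lambda>j. ?d (c * F j) j) \<longlonglongrightarrow> 0"
    by (rule tendsto_sandwich[OF always_eventually bound tendsto_const upper]) (simp add: rho_le_one)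
  from tendsto_diff[OF tendsto_const this, of 1] show ?thesis
    by simp
qed

theorem mainTheorem8:
  fixes f :: "nat \<Rightarrow> real" and \<sigma>s :: "nat \<Rightarrow> nat list" and c :: real
  assumes "scaling_function f"
    and "\<And>j. is_perm (\<sigma>s j)"
    and "filterlim (\<lambda>j. length (\<sigma>s j)) at_top sequentially"
    and "converges_increasing_at_scale f \<sigma>s"
    and "0 < c" and "c < 1"
  shows "converges_increasing_at_scale (\<lambda>n. c * f n) \<sigma>s"
proof -
  let ?F = "\<lambda>j. f (length (\<sigma>s j))"
  have "filterlim f at_top sequentially"
    using assms(1) by (simp add: scaling_function_def)
  then have F_top: "filterlim ?F at_top sequentially"
    by (rule filterlim_compose[OF _ assms(3)])
  have "\<forall>\<^sub>F j in sequentially. length (\<sigma>s j) \<ge> 1"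
    using assms(3) by (simp add: filterlim_at_top)
  then have F_le: "\<forall>\<^sub>F j in sequentially. ?F j \<le> real (length (\<sigma>s j))"
    by eventually_elim (use assms(1) in \<open>simp add: scaling_function_def\<close>)
  have "(\<lambda>j. rho (c * ?F j) [0..<k] (\<sigma>s j)) \<longlonglongrightarrow> 1" if "k \<ge> 1" for k
    using assms(4) that
    by (intro tendsto_rho_increasing_rescale[OF that assms(5,6) F_top F_le])
       (simp add: converges_increasing_at_scale_iff)
  then show ?thesis
    by (simp add: converges_increasing_at_scale_iff)
qed

end
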